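(* Let $C>0$ and $p_0\in(0,1)$ with $Cp_0<1$ be constants such that for every $0<p\le p_0$ and $q\in[0,1]$, $\mathcal G(p,q)$ survives with positive probability whenever $q<\frac25p(1-Cp)$ and dies out almost surely whenever $q>\frac25p(1+Cp)$. Then there exist $C'>0$ and $\Omega_0\in\mathbb N$ such that for every integer $\Omega\ge\Omega_0$ the following holds. For any $\rho\in\big(0,(1+\min(p_0,(2C)^{-1}))(\Omega-1)^{-1}\big]$ let $p(\rho)=(\Omega-1)\rho-1$, let $q_b=(\Omega-1)^{-2}$ and $\hat\rho_c=(\Omega-1)^{-1}+\frac52(\Omega-1)^{-3}$. If $\rho>\hat\rho_c+C'\Omega^{-5}$, then $\mathcal G(p(\rho),q_b)$ survives with positive probability; if $\rho<\hat\rho_c-C'\Omega^{-5}$, then $\mathcal G(p(\rho),q_b)$ dies out almost surely.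
   Context: For $p>-1$ and $q\in[0,1]$ the graph process $\mathcal G(p,q)=(G_n)_{n\ge0}$, $G_n=(V_n,E_n)$, is defined recursively. For each $n$, $I_n\subseteq V_n$ is the set of vertices of the $n$-th generation: $I_0=V_0$ and $I_n=V_n\setminus V_{n-1}$ for $n\ge1$. $G_0$ is a single vertex with no edges. For $n\ge1$, given $G_{n-1}$: 1. For each $u\in I_{n-1}$ let $k_u$ be the number of vertices of $G_{n-1}$ at graph distance exactly $3$ from $u$. Each $u\in I_{n-1}$ has an independent Poisson$(1+p)$ number of potential offspring, and each potential offspring is independently deleted with probability $1-(1-q)^{k_u}$. Form $\tilde G_n$ by adding to $G_{n-1}$ a new vertex for each surviving offspring, joined by an edge to its parent; let $\tilde I_n$ be the set of these new vertices, arbitrarily ordered, $Y_n=|\tilde I_n|$. 2. Let $(B_{i,j})_{1\le i<j\le Y_n}$ be i.i.d. Bernoulli$(q)$. For $i<j$, if the $i$th and $j$th vertices of $\tilde I_n$ are at graph distance exactly $4$ in $\tilde G_n$ and $B_{i,j}=1$, identify them. Form $G_n$ and $I_n$ by merging each equivalence class of the equivalence relation generated by these identifications into one vertex, with edge set the union of their edge sets (multi-edges replaced by single edges). Let $Z_n=|I_n|$. The process survives if $Z_n>0$ for all $n\ge1$; otherwise it dies out. *)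

theory Defs
  imports "HOL-Probability.Probability"
begin

text \<open>States of the process: (V, E, I) with V the vertex set (natural-number labels),
  E a symmetric edge relation, I the current (latest) generation.\<close>

type_synonym gstate = "nat set \<times> (nat \<times> nat) set \<times> nat set"

inductive walk :: "(nat \<times> nat) set \<Rightarrow> nat \<Rightarrow> nat \<Rightarrow> nat \<Rightarrow> bool" for E where
  walk_refl: "walk E u u 0"
| walk_step: "walk E u v n \<Longrightarrow> (v, w) \<in> E \<Longrightarrow> walk E u w (Suc n)"

definition dist_eq :: "(nat \<times> nat) set \<Rightarrow> nat \<Rightarrow> nat \<Rightarrow> nat \<Rightarrow> bool" where
  "dist_eq E u v d \<longleftrightarrow> walk E u v d \<and> (\<forall>m<d. \<not> walk E u v m)"

definition gp_init :: gstate where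
  "gp_init = ({0}, {}, {0})"

definition fresh0 :: "nat set \<Rightarrow> nat" where
  "fresh0 V = (if V = {} then 0 else Max V + 1)"

definition k3 :: "nat set \<Rightarrow> (nat \<times> nat) set \<Rightarrow> nat \<Rightarrow> nat" where
  "k3 V E u = card {v \<in> V. dist_eq E u v 3}"

definition offspring_pmf :: "real \<Rightarrow> real \<Rightarrow> nat \<Rightarrow> nat pmf" where
  "offspring_pmf p q k = bind_pmf (poisson_pmf (1 + p)) (\<lambda>N. binomial_pmf N ((1 - q) ^ k))"

text \<open>Given the offspring counts c of the vertices of I, listed in increasing order,
  the children of the j-th parent receive consecutive fresh labels.\<close>
definition child_start :: "nat list \<Rightarrow> (nat \<Rightarrow> nat) \<Rightarrow> nat \<Rightarrow> nat \<Rightarrow> nat" where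
  "child_start us c f j = f + sum_list (map c (take j us))"

definition children :: "nat set \<Rightarrow> nat \<Rightarrow> (nat \<Rightarrow> nat) \<Rightarrow> nat \<Rightarrow> nat set" where
  "children I f c u =
     (let us = sorted_list_of_set I; j = (THE j. j < length us \<and> us ! j = u)
      in {child_start us c f j ..< child_start us c f j + c u})"

definition grow :: "gstate \<Rightarrow> (nat \<Rightarrow> nat) \<Rightarrow> gstate" where
  "grow s c = (case s of (V, E, I) \<Rightarrow>
     let f = fresh0 V;
         Inew = (\<Union>u\<in>I. children I f c u);
         Enew = (\<Union>u\<in>I. \<Union>w\<in>children I f c u. {(u, w), (w, u)})
     in (V \<union> Inew, E \<union> Enew, Inew))"

definition ident_rel :: "gstate \<Rightarrow> (nat \<times> nat \<Rightarrow> bool) \<Rightarrow> (nat \<times> nat) set" where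
  "ident_rel s B = (case s of (V, E, I) \<Rightarrow>
     {(a, b). a \<in> I \<and> b \<in> I \<and> a < b \<and> dist_eq E a b 4 \<and> B (a, b)})"

definition merge :: "gstate \<Rightarrow> (nat \<times> nat \<Rightarrow> bool) \<Rightarrow> gstate" where
  "merge s B = (case s of (V, E, I) \<Rightarrow>
     let R = (ident_rel s B \<union> (ident_rel s B)\<inverse>)\<^sup>*;
         r = (\<lambda>v. Min {w. (v, w) \<in> R})
     in (r ` V, (\<lambda>(a, b). (r a, r b)) ` E, r ` I))"

definition new_pairs :: "nat set \<Rightarrow> (nat \<times> nat) set" where
  "new_pairs I = {(a, b). a \<in> I \<and> b \<in> I \<and> a < b}"

definition gp_step :: "real \<Rightarrow> real \<Rightarrow> gstate \<Rightarrow> gstate pmf" where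
  "gp_step p q s = (case s of (V, E, I) \<Rightarrow>
     do { c \<leftarrow> Pi_pmf I 0 (\<lambda>u. offspring_pmf p q (k3 V E u));
          let s' = grow s c;
          B \<leftarrow> Pi_pmf (new_pairs (snd (snd s'))) False (\<lambda>_. bernoulli_pmf q);
          return_pmf (merge s' B) })"

text \<open>Joint law of (G_n, [Z_k > 0 for all 1 \<le> k \<le> n]).\<close>
fun gp_path :: "real \<Rightarrow> real \<Rightarrow> nat \<Rightarrow> (gstate \<times> bool) pmf" where
  "gp_path p q 0 = return_pmf (gp_init, True)"
| "gp_path p q (Suc n) =
     bind_pmf (gp_path p q n) (\<lambda>(s, b).
       map_pmf (\<lambda>s'. (s', b \<and> snd (snd s') \<noteq> {})) (gp_step p q s))"

definition alive_prob :: "real \<Rightarrow> real \<Rightarrow> nat \<Rightarrow> real" where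
  "alive_prob p q n = measure_pmf.prob (gp_path p q n) {x. snd x}"

text \<open>P(Z_n > 0 for all n \<ge> 1) is the limit (= infimum) of the decreasing sequence of
  probabilities P(Z_1>0,...,Z_n>0), by continuity of measure.\<close>
definition survives_pos :: "real \<Rightarrow> real \<Rightarrow> bool" where
  "survives_pos p q \<longleftrightarrow> (INF n. alive_prob p q n) > 0"

definition dies_out_as :: "real \<Rightarrow> real \<Rightarrow> bool" where
  "dies_out_as p q \<longleftrightarrow> (INF n. alive_prob p q n) = 0"

end

theory Submission
  imports Defs
begin

text \<open>Write \<open>m = \<Omega> - 1\<close>. Then \<open>p(\<rho>) = m \<rho> - 1\<close> and \<open>q\<^sub>b = 1 / m\<^sup>2\<close>, and \<open>\<rho>\<^sub>c\<close> corresponds to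
  \<open>p = 5 / (2 m\<^sup>2)\<close>, the solution of \<open>q\<^sub>b = 2p/5\<close>. A window of width \<open>O(\<Omega>\<^sup>-\<^sup>5)\<close> in \<open>\<rho>\<close> is a
  window of width \<open>O(m\<^sup>-\<^sup>4)\<close> in \<open>p\<close>, which dominates the error term \<open>C p\<^sup>2 = O(m\<^sup>-\<^sup>4)\<close> of the
  hypothesis, so the hypothesis decides survival on both sides of the window.

  The hypothesis says nothing about \<open>p \<le> 0\<close>, which occurs below the window. There the process
  is subcritical: from generation 3 on each vertex has a vertex at distance exactly 3 (its
  great-grandparent), so its mean number of children is at most \<open>(1 + p)(1 - q) < 1\<close>. The
  expected generation size then decays geometrically, and it bounds the survival probability.\<close>

lemma nn_integral_binomial_pmf_real:
  assumes "r \<in> {0..1}"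
  shows "(\<integral>\<^sup>+k. ennreal (real k) \<partial>binomial_pmf n r) = ennreal (real n * r)"
proof (induction n)
  case 0
  then show ?case using assms by (simp add: binomial_pmf_0)
next
  case (Suc n)
  have "(\<integral>\<^sup>+k. ennreal (real k) \<partial>binomial_pmf (Suc n) r) =
        (\<integral>\<^sup>+b. (\<integral>\<^sup>+k. of_bool b + ennreal (real k) \<partial>binomial_pmf n r) \<partial>bernoulli_pmf r)"
    using assms by (simp add: binomial_pmf_Suc nn_integral_bind_pmf ennreal_plus of_bool_def)
  also have "\<dots> = (\<integral>\<^sup>+b. of_bool b + ennreal (real n * r) \<partial>bernoulli_pmf r)"
    by (simp add: nn_integral_add Suc measure_pmf.emeasure_space_1)
  also have "\<dots> = ennreal ((1 + real n * r) * r + real n * r * (1 - r))"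
    using assms by (simp add: nn_integral_bernoulli_pmf ennreal_plus ennreal_mult)
  also have "(1 + real n * r) * r + real n * r * (1 - r) = real (Suc n) * r"
    by (simp add: algebra_simps)
  finally show ?case .
qed

lemma nn_integral_poisson_pmf_real:
  assumes "0 < l"
  shows "(\<integral>\<^sup>+k. ennreal (real k) \<partial>poisson_pmf l) = ennreal l"
proof -
  have shifted: "real (Suc k) * (l ^ Suc k / fact (Suc k) * exp (-l)) = l * exp (-l) * (l ^ k / fact k)"
    for k by (simp add: field_simps del: of_nat_Suc)
  have "(\<lambda>k. l * exp (-l) * (l ^ k / fact k)) sums (l * exp (-l) * exp l)"
    using exp_converges[of l] by (intro sums_mult) (simp add: divide_inverse mult.commute)
  moreover have "l * exp (-l) * exp l = l" by (simp add: exp_minus field_simps)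
  ultimately have "(\<lambda>k. real (Suc k) * (l ^ Suc k / fact (Suc k) * exp (-l))) sums l"
    by (simp only: shifted)
  then have mean_sums: "(\<lambda>k. real k * (l ^ k / fact k * exp (-l))) sums l"
    using sums_Suc_iff[of "\<lambda>k. real k * (l ^ k / fact k * exp (-l))" l] by simp
  have "(\<integral>\<^sup>+k. ennreal (real k) \<partial>poisson_pmf l) =
        (\<Sum>k. ennreal (real k * (l ^ k / fact k * exp (-l))))"
    using assms by (simp add: nn_integral_measure_pmf nn_integral_count_space_nat
        ennreal_mult'[symmetric] mult.commute)
  also have "\<dots> = ennreal l"
    by (rule suminf_ennreal_eq[OF _ mean_sums]) (use assms in simp)
  finally show ?thesis .
qed

lemma nn_integral_offspring_pmf:
  assumes "-1 < p" "0 \<le> q" "q \<le> 1"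
  shows "(\<integral>\<^sup>+k. ennreal (real k) \<partial>offspring_pmf p q K) = ennreal ((1 + p) * (1 - q) ^ K)"
proof -
  have r: "(1 - q) ^ K \<in> {0..1}" using assms by (simp add: power_le_one)
  have "(\<integral>\<^sup>+k. ennreal (real k) \<partial>offspring_pmf p q K) =
        (\<integral>\<^sup>+N. ennreal (real N) * ennreal ((1 - q) ^ K) \<partial>poisson_pmf (1 + p))"
    using r by (simp add: offspring_pmf_def nn_integral_bind_pmf nn_integral_binomial_pmf_real
        ennreal_mult)
  also have "\<dots> = ennreal ((1 + p) * (1 - q) ^ K)"
    using assms r by (simp add: nn_integral_multc nn_integral_poisson_pmf_real ennreal_mult)
  finally show ?thesis .
qed

text \<open>Merging only identifies vertices of the newest generation, which is why a grading of the
  vertices by generation survives it.\<close>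

definition graded :: "nat \<Rightarrow> gstate \<Rightarrow> bool" where
  "graded n s \<longleftrightarrow> (case s of (V, E, I) \<Rightarrow> \<exists>gen :: nat \<Rightarrow> nat.
     finite V \<and> E \<subseteq> V \<times> V \<and> I = {v \<in> V. gen v = n} \<and> (\<forall>v\<in>V. gen v \<le> n) \<and>
     (\<forall>a b. (a, b) \<in> E \<longrightarrow> gen a \<le> gen b + 1 \<and> gen b \<le> gen a + 1) \<and>
     (\<forall>v\<in>V. 0 < gen v \<longrightarrow> (\<exists>w\<in>V. (v, w) \<in> E \<and> gen w + 1 = gen v)))"

lemma gradedI:
  assumes "finite V" "E \<subseteq> V \<times> V" "I = {v \<in> V. gen v = n}" "\<And>v. v \<in> V \<Longrightarrow> gen v \<le> n"
    "\<And>a b. (a, b) \<in> E \<Longrightarrow> gen a \<le> gen b + 1 \<and> gen b \<le> gen a + 1"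
    "\<And>v. v \<in> V \<Longrightarrow> 0 < gen v \<Longrightarrow> \<exists>w\<in>V. (v, w) \<in> E \<and> gen w + 1 = gen v"
  shows "graded n (V, E, I)"
  unfolding graded_def using assms by blast

lemma gradedE:
  assumes "graded n (V, E, I)"
  obtains gen where "finite V" "E \<subseteq> V \<times> V" "I = {v \<in> V. gen v = n}" "\<And>v. v \<in> V \<Longrightarrow> gen v \<le> n"
    "\<And>a b. (a, b) \<in> E \<Longrightarrow> gen a \<le> gen b + 1 \<and> gen b \<le> gen a + 1"
    "\<And>v. v \<in> V \<Longrightarrow> 0 < gen v \<Longrightarrow> \<exists>w\<in>V. (v, w) \<in> E \<and> gen w + 1 = gen v"
  using assms unfolding graded_def by blast

lemma finite_graded: "graded n (V, E, I) \<Longrightarrow> finite I"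
  by (erule gradedE) simp

lemma graded_gp_init: "graded 0 gp_init"
  unfolding gp_init_def by (rule gradedI[where gen = "\<lambda>_. 0"]) auto

lemma finite_children: "finite (children I f c u)"
  by (simp add: children_def Let_def)

lemma card_children: "card (children I f c u) = c u"
  by (simp add: children_def Let_def)

lemma children_fresh0: "finite V \<Longrightarrow> x \<in> children I (fresh0 V) c u \<Longrightarrow> x \<notin> V"
  unfolding children_def child_start_def fresh0_def Let_def
  by (auto dest: Max_ge split: if_splits)

lemma grow_eq:
  "grow (V, E, I) c =
     (V \<union> (\<Union>u\<in>I. children I (fresh0 V) c u),
      E \<union> (\<Union>u\<in>I. \<Union>w\<in>children I (fresh0 V) c u. {(u, w), (w, u)}),
      \<Union>u\<in>I. children I (fresh0 V) c u)"
  by (simp add: grow_def Let_def)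

lemma graded_grow:
  assumes "graded n s"
  shows "graded (Suc n) (grow s c)"
proof -
  obtain V E I where s: "s = (V, E, I)" by (rule prod_cases3)
  obtain gen where fV: "finite V" and EV: "E \<subseteq> V \<times> V" and I: "I = {v \<in> V. gen v = n}"
    and le: "\<And>v. v \<in> V \<Longrightarrow> gen v \<le> n"
    and edge: "\<And>a b. (a, b) \<in> E \<Longrightarrow> gen a \<le> gen b + 1 \<and> gen b \<le> gen a + 1"
    and parent: "\<And>v. v \<in> V \<Longrightarrow> 0 < gen v \<Longrightarrow> \<exists>w\<in>V. (v, w) \<in> E \<and> gen w + 1 = gen v"
    using assms unfolding s by (rule gradedE) (rule that)
  define N where "N u = children I (fresh0 V) c u" for u
  define gen' where "gen' v = (if v \<in> V then gen v else Suc n)" for v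
  have old: "gen' v = gen v" if "v \<in> V" for v
    using that by (simp add: gen'_def)
  have new: "v \<notin> V" "gen' v = Suc n" if "v \<in> N u" for u v
    using children_fresh0[OF fV] that by (simp_all add: N_def gen'_def)
  have "finite (V \<union> (\<Union>u\<in>I. N u))"
    using fV I by (simp add: N_def finite_children)
  moreover have "E \<union> (\<Union>u\<in>I. \<Union>w\<in>N u. {(u, w), (w, u)}) \<subseteq> (V \<union> (\<Union>u\<in>I. N u)) \<times> (V \<union> (\<Union>u\<in>I. N u))"
    using EV I by blast
  moreover have "(\<Union>u\<in>I. N u) = {v \<in> V \<union> (\<Union>u\<in>I. N u). gen' v = Suc n}"
    using le old new by fastforce
  moreover have "gen' v \<le> Suc n" if "v \<in> V \<union> (\<Union>u\<in>I. N u)" for v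
    using that le old new by fastforce
  moreover have "gen' a \<le> gen' b + 1 \<and> gen' b \<le> gen' a + 1"
    if "(a, b) \<in> E \<union> (\<Union>u\<in>I. \<Union>w\<in>N u. {(u, w), (w, u)})" for a b
    using that
  proof
    assume "(a, b) \<in> E"
    then show ?thesis using EV edge old by auto
  next
    assume "(a, b) \<in> (\<Union>u\<in>I. \<Union>w\<in>N u. {(u, w), (w, u)})"
    then obtain u w where "u \<in> I" "w \<in> N u" "(a, b) = (u, w) \<or> (a, b) = (w, u)" by blast
    then show ?thesis using I old new by auto
  qed
  moreover have "\<exists>w\<in>V \<union> (\<Union>u\<in>I. N u).
      (v, w) \<in> E \<union> (\<Union>u\<in>I. \<Union>w\<in>N u. {(u, w), (w, u)}) \<and> gen' w + 1 = gen' v"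
    if "v \<in> V \<union> (\<Union>u\<in>I. N u)" "0 < gen' v" for v
    using that(1)
  proof
    assume "v \<in> V"
    then show ?thesis using parent[of v] that(2) old by fastforce
  next
    assume "v \<in> (\<Union>u\<in>I. N u)"
    then obtain u where "u \<in> I" "v \<in> N u" by blast
    then show ?thesis using I old new by (intro bexI[of _ u]) auto
  qed
  ultimately show ?thesis
    unfolding s grow_eq N_def[symmetric] by (rule gradedI)
qed

lemma rtrancl_sym_closure_cases:
  assumes "Rel \<subseteq> I \<times> I" "(x, y) \<in> (Rel \<union> Rel\<inverse>)\<^sup>*"
  shows "x = y \<or> x \<in> I \<and> y \<in> I"
  using assms(2) by (induction rule: rtrancl_induct) (use assms(1) in auto)

lemma merge_eq_image:
  assumes "finite I"
  obtains r where "merge (V, E, I) B = (r ` V, (\<lambda>(a, b). (r a, r b)) ` E, r ` I)"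
    and "\<And>x. r x = x \<or> x \<in> I \<and> r x \<in> I"
proof -
  define Rel where "Rel = ident_rel (V, E, I) B"
  define R where "R = (Rel \<union> Rel\<inverse>)\<^sup>*"
  have "Rel \<subseteq> I \<times> I" unfolding Rel_def ident_rel_def by auto
  then have R: "x = y \<or> x \<in> I \<and> y \<in> I" if "(x, y) \<in> R" for x y
    using that unfolding R_def by (rule rtrancl_sym_closure_cases)
  define r where "r x = Min {y. (x, y) \<in> R}" for x
  have r: "(x, r x) \<in> R" for x
  proof -
    have "{y. (x, y) \<in> R} \<subseteq> insert x I" using R by blast
    then have "finite {y. (x, y) \<in> R}" using assms finite_subset by blast
    moreover have "(x, x) \<in> R" unfolding R_def by simp
    ultimately show ?thesis unfolding r_def using Min_in[of "{y. (x, y) \<in> R}"] by blast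
  qed
  show ?thesis
  proof (rule that)
    show "merge (V, E, I) B = (r ` V, (\<lambda>(a, b). (r a, r b)) ` E, r ` I)"
      unfolding merge_def Let_def r_def R_def Rel_def by simp
    show "r x = x \<or> x \<in> I \<and> r x \<in> I" for x
      using R[OF r[of x]] by auto
  qed
qed

lemma graded_merge:
  assumes "graded n s"
  shows "graded n (merge s B)"
proof -
  obtain V E I where s: "s = (V, E, I)" by (rule prod_cases3)
  obtain gen where fV: "finite V" and EV: "E \<subseteq> V \<times> V" and I: "I = {v \<in> V. gen v = n}"
    and le: "\<And>v. v \<in> V \<Longrightarrow> gen v \<le> n"
    and edge: "\<And>a b. (a, b) \<in> E \<Longrightarrow> gen a \<le> gen b + 1 \<and> gen b \<le> gen a + 1"
    and parent: "\<And>v. v \<in> V \<Longrightarrow> 0 < gen v \<Longrightarrow> \<exists>w\<in>V. (v, w) \<in> E \<and> gen w + 1 = gen v"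
    using assms unfolding s by (rule gradedE) (rule that)
  have "finite I" using fV I by simp
  then obtain r where merge: "merge (V, E, I) B = (r ` V, (\<lambda>(a, b). (r a, r b)) ` E, r ` I)"
    and r: "\<And>x. r x = x \<or> x \<in> I \<and> r x \<in> I"
    by (rule merge_eq_image) (rule that)
  have gen_r: "gen (r x) = gen x" for x
    using r[of x] I by auto
  have "finite (r ` V)" using fV by simp
  moreover have "(\<lambda>(a, b). (r a, r b)) ` E \<subseteq> r ` V \<times> r ` V" using EV by auto
  moreover have "r ` I = {v \<in> r ` V. gen v = n}"
    using I gen_r by auto
  moreover have "gen v \<le> n" if "v \<in> r ` V" for v
    using that le gen_r by auto
  moreover have "gen a \<le> gen b + 1 \<and> gen b \<le> gen a + 1"
    if "(a, b) \<in> (\<lambda>(a, b). (r a, r b)) ` E" for a b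
    using that edge gen_r by auto
  moreover have "\<exists>w\<in>r ` V. (v', w) \<in> (\<lambda>(a, b). (r a, r b)) ` E \<and> gen w + 1 = gen v'"
    if v': "v' \<in> r ` V" and pos: "0 < gen v'" for v'
  proof -
    obtain v where v: "v \<in> V" "v' = r v" using v' by blast
    then obtain w where "w \<in> V" "(v, w) \<in> E" "gen w + 1 = gen v"
      using parent pos gen_r by metis
    then show ?thesis
      using v gen_r by (intro bexI[of _ "r w"]) force+
  qed
  ultimately show ?thesis
    unfolding s merge by (rule gradedI)
qed

lemma walk_gen_le:
  assumes "\<And>a b. (a, b) \<in> E \<Longrightarrow> gen a \<le> gen b + 1"
  shows "walk E u v m \<Longrightarrow> gen u \<le> gen v + m"
  by (induction rule: walk.induct) (use assms in fastforce)+

lemma walk_to_ancestor: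
  assumes "\<And>v. v \<in> V \<Longrightarrow> 0 < gen v \<Longrightarrow> \<exists>w\<in>V. (v, w) \<in> E \<and> gen w + 1 = gen v"
  shows "v \<in> V \<Longrightarrow> gen v = m + j \<Longrightarrow> \<exists>w\<in>V. walk E v w j \<and> gen w = m"
proof (induction j arbitrary: m)
  case 0
  then show ?case by (auto intro: walk.intros)
next
  case (Suc j)
  then obtain w where w: "w \<in> V" "walk E v w j" "gen w = Suc m" by fastforce
  with assms obtain w' where "w' \<in> V" "(w, w') \<in> E" "gen w' = m" by fastforce
  then show ?case using w by (auto intro: walk.intros)
qed

lemma k3_pos:
  assumes "graded n (V, E, I)" "3 \<le> n" "u \<in> I"
  shows "0 < k3 V E u"
proof -
  obtain gen where fV: "finite V" and I: "I = {v \<in> V. gen v = n}"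
    and edge: "\<And>a b. (a, b) \<in> E \<Longrightarrow> gen a \<le> gen b + 1 \<and> gen b \<le> gen a + 1"
    and parent: "\<And>v. v \<in> V \<Longrightarrow> 0 < gen v \<Longrightarrow> \<exists>w\<in>V. (v, w) \<in> E \<and> gen w + 1 = gen v"
    using assms(1) by (rule gradedE) blast
  have "u \<in> V" "gen u = (n - 3) + 3" using assms I by auto
  then obtain w where w: "w \<in> V" "walk E u w 3" "gen w = n - 3"
    using walk_to_ancestor[OF parent] by blast
  have "\<not> walk E u w m" if "m < 3" for m
    using walk_gen_le[of E gen, OF conjunct1[OF edge], of u w m] that w assms(2) \<open>gen u = _\<close> by linarith
  then have "w \<in> {v \<in> V. dist_eq E u v 3}"
    using w by (simp add: dist_eq_def)
  then show ?thesis
    unfolding k3_def using fV by (auto simp: card_gt_0_iff)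
qed

lemma gp_step_unfold:
  "gp_step p q (V, E, I) = bind_pmf (Pi_pmf I 0 (\<lambda>u. offspring_pmf p q (k3 V E u)))
     (\<lambda>c. bind_pmf (Pi_pmf (new_pairs (snd (snd (grow (V, E, I) c)))) False (\<lambda>_. bernoulli_pmf q))
        (\<lambda>B. return_pmf (merge (grow (V, E, I) c) B)))"
  unfolding gp_step_def Let_def by simp

lemma graded_gp_path:
  "x \<in> set_pmf (gp_path p q n) \<Longrightarrow> graded n (fst x) \<and> (snd x \<longrightarrow> snd (snd (fst x)) \<noteq> {})"
proof (induction n arbitrary: x)
  case 0
  then show ?case using graded_gp_init by (simp add: gp_init_def)
next
  case (Suc n)
  then obtain s b s' where "(s, b) \<in> set_pmf (gp_path p q n)" and s': "s' \<in> set_pmf (gp_step p q s)"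
    and x: "x = (s', b \<and> snd (snd s') \<noteq> {})"
    by (auto simp: set_bind_pmf)
  moreover obtain V E I where "s = (V, E, I)" by (rule prod_cases3)
  ultimately obtain c B where "graded n (V, E, I)" "s' = merge (grow (V, E, I) c) B"
    using Suc.IH by (fastforce simp: gp_step_unfold)
  then have "graded (Suc n) s'"
    using graded_grow graded_merge by blast
  then show ?case using x by simp
qed

lemma card_merge_grow_le:
  assumes "finite I"
  shows "card (snd (snd (merge (grow (V, E, I) c) B))) \<le> (\<Sum>u\<in>I. c u)"
proof -
  define Inew where "Inew = (\<Union>u\<in>I. children I (fresh0 V) c u)"
  obtain V' E' where grow: "grow (V, E, I) c = (V', E', Inew)"
    unfolding grow_eq Inew_def by simp
  have "finite Inew"
    using assms finite_children unfolding Inew_def by blast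
  then obtain r where "merge (V', E', Inew) B = (r ` V', (\<lambda>(a, b). (r a, r b)) ` E', r ` Inew)"
    using merge_eq_image by blast
  then have "snd (snd (merge (grow (V, E, I) c) B)) = r ` Inew"
    unfolding grow by simp
  moreover have "card (r ` Inew) \<le> card Inew"
    using \<open>finite Inew\<close> by (rule card_image_le)
  moreover have "card Inew \<le> (\<Sum>u\<in>I. c u)"
    unfolding Inew_def using card_UN_le[OF assms, of "children I (fresh0 V) c"] by (simp add: card_children)
  ultimately show ?thesis by simp
qed

lemma nn_integral_card_gp_step_le:
  assumes "finite I" "-1 < p" "0 \<le> q" "q \<le> 1" and K: "\<forall>u\<in>I. K \<le> k3 V E u"
  shows "(\<integral>\<^sup>+s'. ennreal (card (snd (snd s'))) \<partial>gp_step p q (V, E, I))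
           \<le> ennreal ((1 + p) * (1 - q) ^ K) * ennreal (card I)"
proof -
  define F where "F u = offspring_pmf p q (k3 V E u)" for u
  have merged: "(\<integral>\<^sup>+B. ennreal (card (snd (snd (merge (grow (V, E, I) c) B)))) \<partial>M)
      \<le> ennreal (real (\<Sum>u\<in>I. c u))" for c and M :: "(nat \<times> nat \<Rightarrow> bool) pmf"
  proof -
    have "(\<integral>\<^sup>+B. ennreal (card (snd (snd (merge (grow (V, E, I) c) B)))) \<partial>M)
        \<le> (\<integral>\<^sup>+B. ennreal (real (\<Sum>u\<in>I. c u)) \<partial>M)"
      by (intro nn_integral_mono ennreal_leI, unfold of_nat_le_iff, rule card_merge_grow_le[OF assms(1)])
    then show ?thesis by (simp add: measure_pmf.emeasure_space_1)
  qed
  have "(\<integral>\<^sup>+s'. ennreal (card (snd (snd s'))) \<partial>gp_step p q (V, E, I))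
      = (\<integral>\<^sup>+c. (\<integral>\<^sup>+B. ennreal (card (snd (snd (merge (grow (V, E, I) c) B))))
          \<partial>Pi_pmf (new_pairs (snd (snd (grow (V, E, I) c)))) False (\<lambda>_. bernoulli_pmf q)) \<partial>Pi_pmf I 0 F)"
    unfolding gp_step_unfold F_def by simp
  also have "\<dots> \<le> (\<integral>\<^sup>+c. ennreal (real (\<Sum>u\<in>I. c u)) \<partial>Pi_pmf I 0 F)"
    by (intro nn_integral_mono merged)
  also have "\<dots> = (\<Sum>u\<in>I. (\<integral>\<^sup>+c. ennreal (real (c u)) \<partial>Pi_pmf I 0 F))"
    by (simp add: nn_integral_sum flip: sum_ennreal)
  also have "\<dots> = (\<Sum>u\<in>I. (\<integral>\<^sup>+k. ennreal (real k) \<partial>F u))"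
  proof (intro sum.cong refl)
    fix u assume "u \<in> I"
    then have "map_pmf (\<lambda>c. c u) (Pi_pmf I 0 F) = F u"
      by (simp add: Pi_pmf_component[OF assms(1)])
    then have "(\<integral>\<^sup>+k. ennreal (real k) \<partial>F u) =
        (\<integral>\<^sup>+k. ennreal (real k) \<partial>map_pmf (\<lambda>c. c u) (Pi_pmf I 0 F))"
      by simp
    then show "(\<integral>\<^sup>+c. ennreal (real (c u)) \<partial>Pi_pmf I 0 F) = (\<integral>\<^sup>+k. ennreal (real k) \<partial>F u)"
      by simp
  qed
  also have "\<dots> = (\<Sum>u\<in>I. ennreal ((1 + p) * (1 - q) ^ k3 V E u))"
    unfolding F_def using assms by (simp add: nn_integral_offspring_pmf)
  also have "\<dots> \<le> (\<Sum>u\<in>I. ennreal ((1 + p) * (1 - q) ^ K))"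
    using assms by (intro sum_mono ennreal_leI mult_left_mono power_decreasing) auto
  also have "\<dots> = ennreal ((1 + p) * (1 - q) ^ K) * ennreal (card I)"
    by (simp add: mult.commute ennreal_of_nat_eq_real_of_nat)
  finally show ?thesis .
qed

definition mean_generation_size :: "real \<Rightarrow> real \<Rightarrow> nat \<Rightarrow> ennreal" where
  "mean_generation_size p q n = (\<integral>\<^sup>+x. ennreal (card (snd (snd (fst x)))) \<partial>gp_path p q n)"

lemma mean_generation_size_Suc_le:
  assumes "-1 < p" "0 \<le> q" "q \<le> 1"
    and K: "\<And>V E I u. graded n (V, E, I) \<Longrightarrow> u \<in> I \<Longrightarrow> K \<le> k3 V E u"
  shows "mean_generation_size p q (Suc n)
           \<le> ennreal ((1 + p) * (1 - q) ^ K) * mean_generation_size p q n"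
proof -
  have "mean_generation_size p q (Suc n) =
      (\<integral>\<^sup>+x. (\<integral>\<^sup>+s'. ennreal (card (snd (snd s'))) \<partial>gp_step p q (fst x)) \<partial>gp_path p q n)"
    unfolding mean_generation_size_def by (simp add: case_prod_beta nn_integral_bind_pmf)
  also have "\<dots> \<le> (\<integral>\<^sup>+x. ennreal ((1 + p) * (1 - q) ^ K) * ennreal (card (snd (snd (fst x))))
                    \<partial>gp_path p q n)"
  proof (rule nn_integral_mono_AE, unfold AE_measure_pmf_iff, intro ballI)
    fix x assume x: "x \<in> set_pmf (gp_path p q n)"
    obtain V E I b where x_eq: "x = ((V, E, I), b)" by (metis prod.exhaust)
    have "graded n (V, E, I)" using graded_gp_path[OF x] unfolding x_eq by simp
    then have "finite I" by (rule finite_graded)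
    with assms show "(\<integral>\<^sup>+s'. ennreal (card (snd (snd s'))) \<partial>gp_step p q (fst x))
        \<le> ennreal ((1 + p) * (1 - q) ^ K) * ennreal (card (snd (snd (fst x))))"
      unfolding x_eq using K[OF \<open>graded n (V, E, I)\<close>] by (simp add: nn_integral_card_gp_step_le)
  qed
  also have "\<dots> = ennreal ((1 + p) * (1 - q) ^ K) * mean_generation_size p q n"
    unfolding mean_generation_size_def by (rule nn_integral_cmult) simp
  finally show ?thesis .
qed

lemma alive_prob_le_mean_generation_size:
  "ennreal (alive_prob p q n) \<le> mean_generation_size p q n"
proof -
  have "ennreal (alive_prob p q n) = (\<integral>\<^sup>+x. indicator {x. snd x} x \<partial>gp_path p q n)"
    unfolding alive_prob_def by (simp add: measure_pmf.emeasure_eq_measure)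
  also have "\<dots> \<le> mean_generation_size p q n"
    unfolding mean_generation_size_def
  proof (rule nn_integral_mono_AE, unfold AE_measure_pmf_iff, intro ballI)
    fix x assume x: "x \<in> set_pmf (gp_path p q n)"
    obtain V E I b where x_eq: "x = ((V, E, I), b)" by (metis prod.exhaust)
    have "graded n (V, E, I)" and nonempty: "b \<longrightarrow> I \<noteq> {}"
      using graded_gp_path[OF x] unfolding x_eq by simp_all
    from this(1) have "finite I" by (rule finite_graded)
    with nonempty have "b \<longrightarrow> 1 \<le> card I" by (simp add: Suc_le_eq card_gt_0_iff)
    then show "indicator {x. snd x} x \<le> ennreal (card (snd (snd (fst x))))"
      unfolding x_eq by (cases b) (auto simp flip: ennreal_of_nat_eq_real_of_nat)
  qed
  finally show ?thesis .
qed

lemma mean_generation_size_le_geometric: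
  assumes "-1 < p" "0 \<le> q" "q \<le> 1"
  shows "mean_generation_size p q (n + 3) \<le> ennreal ((1 + p) ^ 3 * ((1 + p) * (1 - q)) ^ n)"
proof -
  have early: "mean_generation_size p q n \<le> ennreal ((1 + p) ^ n)" for n
  proof (induction n)
    case 0
    then show ?case
      by (simp add: mean_generation_size_def gp_init_def measure_pmf.emeasure_space_1)
  next
    case (Suc n)
    have "mean_generation_size p q (Suc n) \<le> ennreal (1 + p) * mean_generation_size p q n"
      using mean_generation_size_Suc_le[of p q n 0] assms by simp
    also have "\<dots> \<le> ennreal (1 + p) * ennreal ((1 + p) ^ n)"
      using Suc by (rule mult_left_mono) simp
    finally show ?case
      using assms by (simp add: ennreal_mult')
  qed
  define a where "a = (1 + p) * (1 - q)"
  have "0 \<le> a" unfolding a_def using assms by simp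
  show ?thesis
    unfolding a_def[symmetric]
  proof (induction n)
    case 0
    then show ?case using early[of 3] by simp
  next
    case (Suc n)
    have "mean_generation_size p q (Suc (n + 3)) \<le> ennreal a * mean_generation_size p q (n + 3)"
      using mean_generation_size_Suc_le[of p q "n + 3" 1] assms k3_pos unfolding a_def
      by (simp add: Suc_le_eq)
    also have "\<dots> \<le> ennreal a * ennreal ((1 + p) ^ 3 * a ^ n)"
      using Suc by (rule mult_left_mono) simp
    finally show ?case
      using assms \<open>0 \<le> a\<close> by (simp add: ennreal_mult' mult_ac)
  qed
qed

lemma dies_out_as_if_subcritical:
  assumes "-1 < p" "0 \<le> q" "q \<le> 1" and subcrit: "(1 + p) * (1 - q) < 1"
  shows "dies_out_as p q"
proof -
  define a where "a = (1 + p) * (1 - q)"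
  have "0 \<le> a" unfolding a_def using assms by simp
  have alive: "alive_prob p q (n + 3) \<le> (1 + p) ^ 3 * a ^ n" for n
    using order.trans[OF alive_prob_le_mean_generation_size mean_generation_size_le_geometric]
      assms \<open>0 \<le> a\<close>
    unfolding a_def by (simp add: ennreal_le_iff)
  have nonneg: "0 \<le> alive_prob p q n" for n
    unfolding alive_prob_def by simp
  then have "(INF n. alive_prob p q n) \<le> alive_prob p q (n + 3)" for n
    by (intro cINF_lower bdd_belowI2) auto
  moreover have "(\<lambda>n. (1 + p) ^ 3 * a ^ n) \<longlonglongrightarrow> 0"
    using \<open>0 \<le> a\<close> subcrit unfolding a_def by (intro tendsto_mult_right_zero LIMSEQ_power_zero) simp
  ultimately have "(INF n. alive_prob p q n) \<le> 0"
    using alive by (intro LIMSEQ_le_const[of "\<lambda>n. (1 + p) ^ 3 * a ^ n"]) (auto intro: order.trans)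
  moreover have "0 \<le> (INF n. alive_prob p q n)"
    using nonneg by (intro cINF_greatest) auto
  ultimately show ?thesis
    unfolding dies_out_as_def by simp
qed

lemma less_mult_one_minus:
  fixes C a e p :: real
  assumes "0 < C" "C * (a + e)^2 \<le> e" "a + e < p" "p \<le> 1 / (2 * C)"
  shows "a < p * (1 - C * p)"
proof -
  have "C * (a + e) < C * p" "2 * C * p \<le> 1"
    using assms by (simp, simp add: field_simps)
  then have "C * (p + (a + e)) < 1"
    by (simp add: algebra_simps)
  then have "0 < (p - (a + e)) * (1 - C * (p + (a + e)))"
    using assms by simp
  then show ?thesis
    using assms(2) by (simp add: algebra_simps power2_eq_square)
qed

lemma mult_one_plus_less:
  fixes C a e p :: real
  assumes "0 < C" "C * a^2 \<le> e" "0 < p" "p < a - e"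
  shows "p * (1 + C * p) < a"
proof -
  have "0 \<le> C * a^2" using assms(1) by simp
  then have "0 \<le> e" using assms(2) by linarith
  then have "C * p^2 \<le> C * a^2"
    using assms by (intro mult_left_mono power_mono) auto
  then have "C * p^2 \<le> e"
    using assms(2) by linarith
  then show ?thesis
    using assms(4) by (simp add: algebra_simps power2_eq_square)
qed

text \<open>With \<open>m = \<Omega> - 1\<close> and \<open>p = m \<rho> - 1\<close>, the window \<open>\<rho>\<^sub>c \<plusminus> 300 C / \<Omega>\<^sup>5\<close> becomes
  \<open>p \<in> 5 / (2 m\<^sup>2) \<plusminus> m 300 C / (m + 1)\<^sup>5\<close>; its half-width absorbs the quadratic error \<open>C p\<^sup>2\<close>.\<close>

lemma window_width_dominates_square:
  fixes C m :: real
  assumes "0 < C" "600 * C + 2 \<le> m"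
  shows "C * (5 / (2 * m^2) + m * (300 * C) / (m + 1)^5)^2 \<le> m * (300 * C) / (m + 1)^5"
proof -
  define e where "e = m * (300 * C) / (m + 1)^5"
  have m: "2 \<le> m" using assms by linarith
  have "(m + 1)^5 \<le> (2 * m)^5" using m by (intro power_mono) auto
  then have "m * (300 * C) / (32 * m^5) \<le> e"
    unfolding e_def using m assms(1) by (intro divide_left_mono) auto
  then have e_lower: "300 * C / (32 * m^4) \<le> e"
    using m by (simp add: field_simps power_def)
  have "m^5 \<le> (m + 1)^5" using m by (intro power_mono) auto
  then have "e \<le> m * (300 * C) / m^5"
    unfolding e_def using m assms(1) by (intro divide_left_mono) auto
  also have "\<dots> = 300 * C / m^4"
    using m by (simp add: field_simps power_def)
  also have "\<dots> \<le> 1 / (2 * m^2)"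
  proof -
    have "m \<le> m * m" using m by (simp add: mult_le_cancel_left1)
    then have "600 * C \<le> m * m" using assms by linarith
    then show ?thesis using m by (simp add: field_simps power_def)
  qed
  finally have "0 \<le> 5 / (2 * m^2) + e" "5 / (2 * m^2) + e \<le> 3 / m^2"
    using m assms(1) by (auto simp: e_def)
  then have "C * (5 / (2 * m^2) + e)^2 \<le> C * (3 / m^2)^2"
    using assms(1) by (intro mult_left_mono power_mono) auto
  also have "\<dots> \<le> 300 * C / (32 * m^4)"
    using assms(1) m by (simp add: field_simps power_def)
  finally show ?thesis
    using e_lower unfolding e_def by linarith
qed

locale threshold_expansion =
  fixes C p0 :: real
  assumes C_pos: "0 < C"
    and survives_below: "\<And>p q. 0 < p \<Longrightarrow> p \<le> p0 \<Longrightarrow> 0 \<le> q \<Longrightarrow> q \<le> 1 \<Longrightarrow>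
      q < 2/5 * p * (1 - C * p) \<Longrightarrow> survives_pos p q"
    and dies_above: "\<And>p q. 0 < p \<Longrightarrow> p \<le> p0 \<Longrightarrow> 0 \<le> q \<Longrightarrow> q \<le> 1 \<Longrightarrow>
      2/5 * p * (1 + C * p) < q \<Longrightarrow> dies_out_as p q"
begin

lemma survives_above_window:
  fixes m p :: real
  assumes m: "600 * C + 2 \<le> m"
    and p: "5 / (2 * m^2) + m * (300 * C) / (m + 1)^5 < p" "p \<le> p0" "p \<le> 1 / (2 * C)"
  shows "survives_pos p (1 / m^2)"
proof (rule survives_below)
  have "1 \<le> m" using m C_pos by linarith
  have "5 / (2 * m^2) < p * (1 - C * p)"
    using less_mult_one_minus[OF C_pos window_width_dominates_square[OF C_pos m] p(1,3)] .
  then show "1 / m^2 < 2/5 * p * (1 - C * p)"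
    using \<open>1 \<le> m\<close> by (simp add: field_simps)
  have "0 < 5 / (2 * m^2)" "0 \<le> m * (300 * C) / (m + 1)^5"
    using \<open>1 \<le> m\<close> C_pos by simp_all
  then show "0 < p"
    using p(1) by linarith
  show "p \<le> p0" by fact
  show "0 \<le> 1 / m^2" by simp
  show "1 / m^2 \<le> 1"
    using \<open>1 \<le> m\<close> by (simp add: one_le_power)
qed

lemma dies_below_window:
  fixes m p :: real
  assumes m: "600 * C + 2 \<le> m"
    and p: "-1 < p" "p < 5 / (2 * m^2) - m * (300 * C) / (m + 1)^5" "p \<le> p0"
  shows "dies_out_as p (1 / m^2)"
proof -
  have "1 \<le> m" using m C_pos by linarith
  then have q: "0 < 1 / m^2" "1 / m^2 \<le> 1"
    by (simp_all add: one_le_power)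
  show ?thesis
  proof (cases "p \<le> 0")
    case True
    \<comment> \<open>not covered by the hypothesis, but then the process is subcritical\<close>
    have "(1 + p) * (1 - 1 / m^2) \<le> 1 - 1 / m^2"
      using mult_right_mono[of "1 + p" 1 "1 - 1 / m^2"] True q by simp
    then have "(1 + p) * (1 - 1 / m^2) < 1"
      using q(1) by linarith
    with p(1) q show ?thesis
      by (intro dies_out_as_if_subcritical) auto
  next
    case False
    define e where "e = m * (300 * C) / (m + 1)^5"
    have "C * (5 / (2 * m^2))^2 \<le> C * (5 / (2 * m^2) + e)^2"
      using C_pos \<open>1 \<le> m\<close> by (intro mult_left_mono power_mono) (auto simp: e_def)
    also have "\<dots> \<le> e"
      unfolding e_def by (rule window_width_dominates_square[OF C_pos m])
    finally have "p * (1 + C * p) < 5 / (2 * m^2)"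
      using False p(2) by (intro mult_one_plus_less[OF C_pos]) (auto simp: e_def)
    then have "2/5 * p * (1 + C * p) < 1 / m^2"
      using \<open>1 \<le> m\<close> by (simp add: field_simps)
    with False p(3) q show ?thesis
      by (intro dies_above) auto
  qed
qed

lemma critical_window:
  fixes \<Omega> :: nat and \<rho> :: real
  assumes \<Omega>: "nat \<lceil>600 * C\<rceil> + 3 \<le> \<Omega>" and \<rho>: "0 < \<rho>" "\<rho> \<le> (1 + min p0 (1 / (2 * C))) / (real \<Omega> - 1)"
  defines "m \<equiv> real \<Omega> - 1"
  shows "1 / m + 5/2 * (1 / m^3) + 300 * C / real \<Omega> ^ 5 < \<rho> \<Longrightarrow> survives_pos (m * \<rho> - 1) (1 / m^2)"
    and "\<rho> < 1 / m + 5/2 * (1 / m^3) - 300 * C / real \<Omega> ^ 5 \<Longrightarrow> dies_out_as (m * \<rho> - 1) (1 / m^2)"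
proof -
  have "600 * C \<le> real (nat \<lceil>600 * C\<rceil>)" by (rule real_nat_ceiling_ge)
  then have m: "600 * C + 2 \<le> m" using \<Omega> unfolding m_def by linarith
  then have "0 < m" using C_pos by linarith
  have \<Omega>_eq: "real \<Omega> = m + 1" by (simp add: m_def)
  have p: "-1 < m * \<rho> - 1" "m * \<rho> - 1 \<le> min p0 (1 / (2 * C))"
    using \<rho> \<open>0 < m\<close> by (auto simp: m_def[symmetric] pos_le_divide_eq mult.commute)
  have centre: "m * (1 / m + 5/2 * (1 / m^3)) - 1 = 5 / (2 * m^2)"
    using \<open>0 < m\<close> by (simp add: field_simps power_def)
  show "survives_pos (m * \<rho> - 1) (1 / m^2)"
    if "1 / m + 5/2 * (1 / m^3) + 300 * C / real \<Omega> ^ 5 < \<rho>"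
  proof (rule survives_above_window[OF m])
    have "m * (1 / m + 5/2 * (1 / m^3) + 300 * C / real \<Omega> ^ 5) < m * \<rho>"
      using that \<open>0 < m\<close> by (rule mult_strict_left_mono)
    then show "5 / (2 * m^2) + m * (300 * C) / (m + 1)^5 < m * \<rho> - 1"
      using centre unfolding \<Omega>_eq by (simp add: distrib_left)
  qed (use p in auto)
  show "dies_out_as (m * \<rho> - 1) (1 / m^2)"
    if "\<rho> < 1 / m + 5/2 * (1 / m^3) - 300 * C / real \<Omega> ^ 5"
  proof (rule dies_below_window[OF m])
    have "m * \<rho> < m * (1 / m + 5/2 * (1 / m^3) - 300 * C / real \<Omega> ^ 5)"
      using that \<open>0 < m\<close> by (rule mult_strict_left_mono)
    then show "m * \<rho> - 1 < 5 / (2 * m^2) - m * (300 * C) / (m + 1)^5"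
      using centre unfolding \<Omega>_eq by (simp add: right_diff_distrib)
  qed (use p in auto)
qed

end

theorem corollary1p2:
  fixes C p0 :: real
  assumes "C > 0" and "0 < p0" and "p0 < 1" and "C * p0 < 1"
    and hyp: "\<And>p q. 0 < p \<Longrightarrow> p \<le> p0 \<Longrightarrow> 0 \<le> q \<Longrightarrow> q \<le> 1 \<Longrightarrow>
        (q < 2/5 * p * (1 - C * p) \<longrightarrow> survives_pos p q) \<and>
        (q > 2/5 * p * (1 + C * p) \<longrightarrow> dies_out_as p q)"
  shows "\<exists>C' > 0. \<exists>\<Omega>0 :: nat. \<forall>\<Omega> :: nat. \<Omega> \<ge> \<Omega>0 \<longrightarrow>
     (\<forall>\<rho> :: real. 0 < \<rho> \<and> \<rho> \<le> (1 + min p0 (1 / (2 * C))) / (real \<Omega> - 1) \<longrightarrow>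
        (let p\<rho> = (real \<Omega> - 1) * \<rho> - 1;
             qb = 1 / (real \<Omega> - 1)^2;
             \<rho>c = 1 / (real \<Omega> - 1) + 5/2 * (1 / (real \<Omega> - 1)^3)
         in (\<rho> > \<rho>c + C' / real \<Omega> ^ 5 \<longrightarrow> survives_pos p\<rho> qb) \<and>
            (\<rho> < \<rho>c - C' / real \<Omega> ^ 5 \<longrightarrow> dies_out_as p\<rho> qb)))"
proof -
  interpret threshold_expansion C p0
    by unfold_locales (use assms in blast)+
  show ?thesis
    unfolding Let_def using C_pos critical_window
    by (intro exI[of _ "300 * C"] conjI exI[of _ "nat \<lceil>600 * C\<rceil> + 3"] allI impI) auto
qed

end
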